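(* Let $X$ be a compact metric space and let $f\colon X\to X$ be an $n$-expansive homeomorphism with the L-shadowing property. Then there exists $\varepsilon>0$ such that $\bar{n}(x,\varepsilon)\cdot n(x,\varepsilon)\leq n$ for every $x\in X$. If, in addition, $f$ is transitive, then $\bar{n}(x,\varepsilon)\cdot n(y,\varepsilon)\leq n$ for every $x,y\in X$.
   Context: Let $(X,d)$ be a compact metric space and $f\colon X\to X$ a homeomorphism. For $x\in X$ and $c>0$: $W^s_c(x)=\{y: d(f^k(y),f^k(x))\leq c\ \forall k\geq0\}$, $W^u_c(x)=\{y: d(f^k(y),f^k(x))\leq c\ \forall k\leq0\}$, $W^s(x)=\{y: d(f^k(y),f^k(x))\to0 \text{ as } k\to\infty\}$, $W^u(x)=\{y: d(f^k(y),f^k(x))\to0 \text{ as } k\to-\infty\}$. $f$ is $n$-expansive if there is $c>0$ such that $W^s_c(x)\cap W^u_c(x)$ has at most $n$ points for every $x\in X$. The number $n(x,\varepsilon)$ of different stable sets in $W^s_\varepsilon(x)$ is the largest cardinality of a subset $E\subset W^s_\varepsilon(x)$ such that any two distinct $y,z\in E$ satisfy $y\notin W^s(z)$ (so any $n(x,\varepsilon)+1$ distinct points of $W^s_\varepsilon(x)$ contain two distinct points in the same stable set). Analogously $\bar n(x,\varepsilon)$ is the largest cardinality of a subset of $W^u_\varepsilon(x)$ whose distinct points lie in pairwise different unstable sets. A $\delta$-pseudo orbit is $(x_k)_{k\in\mathbb{Z}}$ with $d(f(x_k),x_{k+1})<\delta$ for all $k$; a two-sided limit pseudo orbit satisfies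 $d(f(x_k),x_{k+1})\to0$ as $|k|\to\infty$. $z$ $\varepsilon$-shadows $(x_k)$ if $d(f^k(z),x_k)<\varepsilon$ for all $k$, and two-sided limit shadows it if $d(f^k(z),x_k)\to0$ as $|k|\to\infty$. $f$ has the L-shadowing property if for every $\varepsilon>0$ there is $\delta>0$ such that every $\delta$-pseudo orbit that is also a two-sided limit pseudo orbit is both $\varepsilon$-shadowed and two-sided limit shadowed by a single point. $f$ is transitive if for every nonempty open $U,V$ there is $k\in\mathbb{N}$ with $f^k(U)\cap V\neq\emptyset$. *)

theory Defs
  imports "HOL-Analysis.Analysis" "HOL-Library.Extended_Nat"
begin

definition iter :: "('a \<Rightarrow> 'a) \<Rightarrow> int \<Rightarrow> 'a \<Rightarrow> 'a" where
  "iter f k x = (if k \<ge> 0 then (f ^^ nat k) x else (inv f ^^ nat (- k)) x)"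

definition loc_stable :: "('a::metric_space \<Rightarrow> 'a) \<Rightarrow> real \<Rightarrow> 'a \<Rightarrow> 'a set" where
  "loc_stable f c x = {y. \<forall>k::int. k \<ge> 0 \<longrightarrow> dist (iter f k y) (iter f k x) \<le> c}"

definition loc_unstable :: "('a::metric_space \<Rightarrow> 'a) \<Rightarrow> real \<Rightarrow> 'a \<Rightarrow> 'a set" where
  "loc_unstable f c x = {y. \<forall>k::int. k \<le> 0 \<longrightarrow> dist (iter f k y) (iter f k x) \<le> c}"

definition stable_set :: "('a::metric_space \<Rightarrow> 'a) \<Rightarrow> 'a \<Rightarrow> 'a set" where
  "stable_set f x = {y. ((\<lambda>k. dist (iter f k y) (iter f k x)) \<longlongrightarrow> 0) at_top}"

definition unstable_set :: "('a::metric_space \<Rightarrow> 'a) \<Rightarrow> 'a \<Rightarrow> 'a set" where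
  "unstable_set f x = {y. ((\<lambda>k. dist (iter f k y) (iter f k x)) \<longlongrightarrow> 0) at_bot}"

definition n_expansive :: "('a::metric_space \<Rightarrow> 'a) \<Rightarrow> nat \<Rightarrow> bool" where
  "n_expansive f n \<longleftrightarrow> (\<exists>c>0. \<forall>x. finite (loc_stable f c x \<inter> loc_unstable f c x)
      \<and> card (loc_stable f c x \<inter> loc_unstable f c x) \<le> n)"

text \<open>Number of different stable sets in W^s_eps(x): supremum (possibly infinite) of
  cardinalities of subsets whose distinct points lie in pairwise different stable sets.\<close>
definition num_stable :: "('a::metric_space \<Rightarrow> 'a) \<Rightarrow> 'a \<Rightarrow> real \<Rightarrow> enat" where
  "num_stable f x e = Sup {enat (card E) | E. finite E \<and> E \<subseteq> loc_stable f e x \<and>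
      (\<forall>y\<in>E. \<forall>z\<in>E. y \<noteq> z \<longrightarrow> y \<notin> stable_set f z)}"

definition num_unstable :: "('a::metric_space \<Rightarrow> 'a) \<Rightarrow> 'a \<Rightarrow> real \<Rightarrow> enat" where
  "num_unstable f x e = Sup {enat (card E) | E. finite E \<and> E \<subseteq> loc_unstable f e x \<and>
      (\<forall>y\<in>E. \<forall>z\<in>E. y \<noteq> z \<longrightarrow> y \<notin> unstable_set f z)}"

definition pseudo_orbit :: "('a::metric_space \<Rightarrow> 'a) \<Rightarrow> real \<Rightarrow> (int \<Rightarrow> 'a) \<Rightarrow> bool" where
  "pseudo_orbit f d xs \<longleftrightarrow> (\<forall>k. dist (f (xs k)) (xs (k + 1)) < d)"

definition limit_pseudo_orbit :: "('a::metric_space \<Rightarrow> 'a) \<Rightarrow> (int \<Rightarrow> 'a) \<Rightarrow> bool" where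
  "limit_pseudo_orbit f xs \<longleftrightarrow>
     ((\<lambda>k. dist (f (xs k)) (xs (k + 1))) \<longlongrightarrow> 0) at_top \<and>
     ((\<lambda>k. dist (f (xs k)) (xs (k + 1))) \<longlongrightarrow> 0) at_bot"

definition eps_shadows :: "('a::metric_space \<Rightarrow> 'a) \<Rightarrow> real \<Rightarrow> 'a \<Rightarrow> (int \<Rightarrow> 'a) \<Rightarrow> bool" where
  "eps_shadows f e z xs \<longleftrightarrow> (\<forall>k. dist (iter f k z) (xs k) < e)"

definition limit_shadows :: "('a::metric_space \<Rightarrow> 'a) \<Rightarrow> 'a \<Rightarrow> (int \<Rightarrow> 'a) \<Rightarrow> bool" where
  "limit_shadows f z xs \<longleftrightarrow>
     ((\<lambda>k. dist (iter f k z) (xs k)) \<longlongrightarrow> 0) at_top \<and>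
     ((\<lambda>k. dist (iter f k z) (xs k)) \<longlongrightarrow> 0) at_bot"

definition L_shadowing :: "('a::metric_space \<Rightarrow> 'a) \<Rightarrow> bool" where
  "L_shadowing f \<longleftrightarrow> (\<forall>e>0. \<exists>d>0. \<forall>xs. pseudo_orbit f d xs \<and> limit_pseudo_orbit f xs
      \<longrightarrow> (\<exists>z. eps_shadows f e z xs \<and> limit_shadows f z xs))"

definition transitive :: "('a::topological_space \<Rightarrow> 'a) \<Rightarrow> bool" where
  "transitive f \<longleftrightarrow> (\<forall>U V. open U \<and> U \<noteq> {} \<and> open V \<and> V \<noteq> {} \<longrightarrow>
      (\<exists>k::nat. k > 0 \<and> (f ^^ k) ` U \<inter> V \<noteq> {}))"

end

theory Submission imports Defs begin

text \<open>Fix a shadowing scale e and suppose that some orbit segment w, ..., f^m w starts e-close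
  to x and ends e-close to y. For p in W^u_e(x) and q in W^s_e(y), the backward orbit of p,
  followed by the segment, followed by the forward orbit of q is a two-sided limit pseudo orbit,
  so L-shadowing yields a point z(p, q) that is backward asymptotic to p and forward asymptotic
  to f^-m q. Hence z is injective on pairs taken from distinct unstable and distinct stable
  sets, and all the points z(p, q) stay c-close to each other along the whole orbit. They
  therefore lie in W^s_c(u) \<inter> W^u_c(u) for a single u, which has at most n points.
  Taking m = 0 and w = x gives the first bound; transitivity provides w and m for any x, y.\<close>

lemma iter_0 [simp]: "iter f 0 x = x"
  by (simp add: iter_def)

lemma iter_of_nat: "iter f (int m) x = (f ^^ m) x"
  by (simp add: iter_def)

lemma iter_succ:
  assumes "bij f"
  shows "f (iter f k x) = iter f (k + 1) x"
proof (cases "k \<ge> 0")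
  case True
  then have "nat (k + 1) = Suc (nat k)" by simp
  with True show ?thesis by (simp add: iter_def)
next
  case False
  define n where "n = nat (- k - 1)"
  have n: "k = - int (Suc n)" "nat (- k) = Suc n" using False unfolding n_def by simp_all
  have "f (iter f k x) = f (inv f ((inv f ^^ n) x))" using False n(2) by (simp add: iter_def)
  also have "\<dots> = (inv f ^^ n) x" using assms by (simp add: bij_is_surj surj_f_inv_f)
  also have "\<dots> = iter f (k + 1) x"
    using n(1) by (cases n) (simp_all add: iter_def nat_add_distrib)
  finally show ?thesis .
qed

lemma tendsto_dist_zero_through:
  fixes a b c :: "'b \<Rightarrow> 'a::metric_space"
  assumes "((\<lambda>k. dist (a k) (b k)) \<longlongrightarrow> 0) F" "((\<lambda>k. dist (c k) (b k)) \<longlongrightarrow> 0) F"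
  shows "((\<lambda>k. dist (a k) (c k)) \<longlongrightarrow> 0) F"
proof (rule tendsto_sandwich[of "\<lambda>_. 0" _ _ "\<lambda>k. dist (a k) (b k) + dist (c k) (b k)"])
  show "\<forall>\<^sub>F k in F. dist (a k) (c k) \<le> dist (a k) (b k) + dist (c k) (b k)"
    by (simp add: dist_triangle2)
  show "((\<lambda>k. dist (a k) (b k) + dist (c k) (b k)) \<longlongrightarrow> 0) F"
    using tendsto_add[OF assms] by simp
qed simp_all

lemma filterlim_add_const_int_at_top: "filterlim (\<lambda>k::int. k + c) at_top at_top"
  unfolding filterlim_at_top eventually_at_top_linorder
  by (metis add.commute diff_add_cancel add_le_cancel_left)

definition expansivity_constant :: "('a::metric_space \<Rightarrow> 'a) \<Rightarrow> nat \<Rightarrow> real \<Rightarrow> bool" where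
  "expansivity_constant f n c \<longleftrightarrow> (\<forall>x. finite (loc_stable f c x \<inter> loc_unstable f c x)
      \<and> card (loc_stable f c x \<inter> loc_unstable f c x) \<le> n)"

definition L_shadowing_delta :: "('a::metric_space \<Rightarrow> 'a) \<Rightarrow> real \<Rightarrow> real \<Rightarrow> bool" where
  "L_shadowing_delta f e d \<longleftrightarrow> (\<forall>xs. pseudo_orbit f d xs \<and> limit_pseudo_orbit f xs
      \<longrightarrow> (\<exists>z. eps_shadows f e z xs \<and> limit_shadows f z xs))"

lemma n_expansive_iff: "n_expansive f n \<longleftrightarrow> (\<exists>c>0. expansivity_constant f n c)"
  by (simp add: n_expansive_def expansivity_constant_def)

lemma L_shadowing_iff: "L_shadowing f \<longleftrightarrow> (\<forall>e>0. \<exists>d>0. L_shadowing_delta f e d)"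
  by (simp add: L_shadowing_def L_shadowing_delta_def)

definition glue_orbits :: "('a \<Rightarrow> 'a) \<Rightarrow> 'a \<Rightarrow> 'a \<Rightarrow> nat \<Rightarrow> 'a \<Rightarrow> int \<Rightarrow> 'a" where
  "glue_orbits f p w m q k =
     (if k < 0 then iter f k p else if k < int m then iter f k w else iter f (k - int m) q)"

lemma glue_orbits_pseudo_orbit:
  fixes f :: "'a::metric_space \<Rightarrow> 'a"
  assumes "bij f" "e > 0" "4 * e \<le> d"
    and w: "dist w x < e" "dist (iter f (int m) w) y < e"
    and pq: "dist p x \<le> e" "dist q y \<le> e"
  shows "pseudo_orbit f d (glue_orbits f p w m q)"
  unfolding pseudo_orbit_def
proof
  fix k :: int
  let ?g = "glue_orbits f p w m q"
  have fp: "f (iter f (-1) p) = p" using iter_succ[OF \<open>bij f\<close>, of "-1" p] by simp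
  have fw: "f (iter f k w) = iter f (int m) w" if "k + 1 = int m"
    using iter_succ[OF \<open>bij f\<close>, of k w] that by simp
  have fq: "f (iter f (k - int m) q) = iter f (k + 1 - int m) q"
    using iter_succ[OF \<open>bij f\<close>, of "k - int m" q] by (simp add: algebra_simps)
  consider "k = -1" "m = 0" | "k = -1" "m > 0" | "k \<ge> 0" "k + 1 = int m"
    | "k \<noteq> -1" "k + 1 \<noteq> int m"
    by linarith
  then show "dist (f (?g k)) (?g (k + 1)) < d"
  proof cases
    case 1
    then have "dist w y < e" using w by simp
    then have "dist p q < 4 * e" using w pq by (smt (verit) dist_commute dist_triangle)
    with 1 fp \<open>4 * e \<le> d\<close> show ?thesis by (simp add: glue_orbits_def)
  next
    case 2
    have "dist p w < 2 * e" using w pq by (smt (verit) dist_commute dist_triangle)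
    with 2 fp \<open>4 * e \<le> d\<close> \<open>e > 0\<close> show ?thesis by (simp add: glue_orbits_def)
  next
    case 3
    have "dist (iter f (int m) w) q < 2 * e"
      using w pq by (smt (verit) dist_commute dist_triangle)
    with 3 fw \<open>4 * e \<le> d\<close> \<open>e > 0\<close> show ?thesis by (simp add: glue_orbits_def)
  next
    case 4
    then have "f (?g k) = ?g (k + 1)"
      using iter_succ[OF \<open>bij f\<close>] fq by (auto simp: glue_orbits_def)
    with \<open>e > 0\<close> \<open>4 * e \<le> d\<close> show ?thesis by simp
  qed
qed

lemma glue_orbits_limit_pseudo_orbit:
  assumes "bij f"
  shows "limit_pseudo_orbit f (glue_orbits f p w m q)"
proof -
  let ?g = "glue_orbits f p w m q"
  have "f (?g k) = ?g (k + 1)" if "k \<ge> int m" for k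
    using that iter_succ[OF assms, of "k - int m" q] by (simp add: glue_orbits_def algebra_simps)
  then have "\<forall>\<^sub>F k in at_top. dist (f (?g k)) (?g (k + 1)) = 0"
    unfolding eventually_at_top_linorder by auto
  moreover have "f (?g k) = ?g (k + 1)" if "k \<le> -2" for k
    using that iter_succ[OF assms, of k p] by (simp add: glue_orbits_def)
  then have "\<forall>\<^sub>F k in at_bot. dist (f (?g k)) (?g (k + 1)) = 0"
    unfolding eventually_at_bot_linorder by (intro exI[of _ "-2"]) auto
  ultimately show ?thesis
    unfolding limit_pseudo_orbit_def by (auto intro: tendsto_eventually)
qed

lemma dist_glue_orbits_le:
  assumes "p \<in> loc_unstable f e x" "p' \<in> loc_unstable f e x"
    and "q \<in> loc_stable f e y" "q' \<in> loc_stable f e y" "e \<ge> 0"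
  shows "dist (glue_orbits f p w m q k) (glue_orbits f p' w m q' k) \<le> 2 * e"
proof -
  have close: "dist (iter f j a) (iter f j a') \<le> 2 * e"
    if "dist (iter f j a) (iter f j b) \<le> e" "dist (iter f j a') (iter f j b) \<le> e" for j a a' b
    using that dist_triangle2[of "iter f j a" "iter f j a'" "iter f j b"] by linarith
  with assms show ?thesis
    unfolding glue_orbits_def loc_unstable_def loc_stable_def
    by (auto intro: close[where b = x] close[where b = y])
qed

lemma limit_shadows_glue_orbits:
  assumes "limit_shadows f z (glue_orbits f p w m q)"
  shows "z \<in> unstable_set f p"
    and "((\<lambda>k. dist (iter f (k + int m) z) (iter f k q)) \<longlongrightarrow> 0) at_top"
proof -
  let ?h = "\<lambda>k. dist (iter f k z) (glue_orbits f p w m q k)"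
  have "\<forall>\<^sub>F k in at_bot. ?h k = dist (iter f k z) (iter f k p)"
    unfolding eventually_at_bot_linorder by (intro exI[of _ "-1"]) (simp add: glue_orbits_def)
  with assms show "z \<in> unstable_set f p"
    unfolding limit_shadows_def unstable_set_def by (blast intro: Lim_transform_eventually)
  have "((?h \<circ> (\<lambda>k. k + int m)) \<longlongrightarrow> 0) at_top"
    using filterlim_compose[OF _ filterlim_add_const_int_at_top] assms
    unfolding limit_shadows_def comp_def by blast
  moreover have "\<forall>\<^sub>F k in at_top.
      (?h \<circ> (\<lambda>k. k + int m)) k = dist (iter f (k + int m) z) (iter f k q)"
    unfolding eventually_at_top_linorder by (intro exI[of _ 0]) (simp add: glue_orbits_def)
  ultimately show "((\<lambda>k. dist (iter f (k + int m) z) (iter f k q)) \<longlongrightarrow> 0) at_top"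
    by (rule Lim_transform_eventually)
qed

lemma inj_on_limit_shadows_glue_orbits:
  assumes "pairwise (\<lambda>a b. a \<notin> unstable_set f b) P" "pairwise (\<lambda>a b. a \<notin> stable_set f b) Q"
    and "\<forall>p\<in>P. \<forall>q\<in>Q. limit_shadows f (z (p, q)) (glue_orbits f p w m q)"
  shows "inj_on z (P \<times> Q)"
proof (rule inj_onI, safe)
  fix p q p' q' assume pq: "p \<in> P" "q \<in> Q" "p' \<in> P" "q' \<in> Q" and eq: "z (p, q) = z (p', q')"
  note lim = limit_shadows_glue_orbits[OF assms(3)[rule_format, OF pq(1,2)]]
    limit_shadows_glue_orbits[OF assms(3)[rule_format, OF pq(3,4)]]
  have "((\<lambda>k. dist (iter f k p) (iter f k p')) \<longlongrightarrow> 0) at_bot"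
    using lim(1,3) eq unfolding unstable_set_def
    by (auto simp: dist_commute intro: tendsto_dist_zero_through)
  with assms(1) pq show "p = p'"
    unfolding unstable_set_def pairwise_def by blast
  have "((\<lambda>k. dist (iter f k q) (iter f k q')) \<longlongrightarrow> 0) at_top"
    using lim(2,4) eq by (auto simp: dist_commute intro: tendsto_dist_zero_through)
  with assms(2) pq show "q = q'"
    unfolding stable_set_def pairwise_def by blast
qed

lemma eps_shadows_glue_orbits_close:
  assumes "eps_shadows f r z (glue_orbits f p w m q)" "eps_shadows f r z' (glue_orbits f p' w m q')"
    and "p \<in> loc_unstable f e x" "p' \<in> loc_unstable f e x"
    and "q \<in> loc_stable f e y" "q' \<in> loc_stable f e y"
    and "e \<ge> 0" "2 * r + 2 * e \<le> c"
  shows "z \<in> loc_stable f c z' \<inter> loc_unstable f c z'"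
proof -
  have "dist (iter f k z) (iter f k z') \<le> c" for k
  proof -
    let ?g = "glue_orbits f p w m q k" and ?g' = "glue_orbits f p' w m q' k"
    have "dist (iter f k z) (iter f k z')
        \<le> dist (iter f k z) ?g + dist ?g ?g' + dist (iter f k z') ?g'"
      using dist_triangle[of "iter f k z" "iter f k z'" ?g] dist_triangle2[of ?g "iter f k z'" ?g']
      by linarith
    moreover have "dist ?g ?g' \<le> 2 * e" using assms(3-7) by (rule dist_glue_orbits_le)
    moreover have "dist (iter f k z) ?g < r" "dist (iter f k z') ?g' < r"
      using assms(1,2) unfolding eps_shadows_def by auto
    ultimately show ?thesis using assms(8) by linarith
  qed
  then show ?thesis unfolding loc_stable_def loc_unstable_def by auto
qed

lemma card_mult_card_le_expansivity_constant:
  fixes f :: "'a::metric_space \<Rightarrow> 'a"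
  assumes "bij f" "expansivity_constant f n c" "L_shadowing_delta f (c / 4) d"
    and e: "e > 0" "4 * e \<le> d" "4 * e \<le> c"
    and w: "dist w x < e" "dist (iter f (int m) w) y < e"
    and P: "finite P" "P \<subseteq> loc_unstable f e x" "pairwise (\<lambda>a b. a \<notin> unstable_set f b) P"
    and Q: "finite Q" "Q \<subseteq> loc_stable f e y" "pairwise (\<lambda>a b. a \<notin> stable_set f b) Q"
  shows "card P * card Q \<le> n"
proof (cases "P = {} \<or> Q = {}")
  case True
  then show ?thesis by auto
next
  case False
  then obtain p0 q0 where pq0: "p0 \<in> P" "q0 \<in> Q" by auto
  have "\<forall>pq\<in>P \<times> Q. \<exists>z. eps_shadows f (c / 4) z (glue_orbits f (fst pq) w m (snd pq))
      \<and> limit_shadows f z (glue_orbits f (fst pq) w m (snd pq))"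
  proof (safe, simp only: fst_conv snd_conv)
    fix p q assume "p \<in> P" "q \<in> Q"
    then have "dist p x \<le> e" "dist q y \<le> e"
      using P(2) Q(2) unfolding loc_unstable_def loc_stable_def by (force, force)
    then have "pseudo_orbit f d (glue_orbits f p w m q)"
      using glue_orbits_pseudo_orbit[OF \<open>bij f\<close> e(1,2) w] by blast
    with assms(3) glue_orbits_limit_pseudo_orbit[OF \<open>bij f\<close>]
    show "\<exists>z. eps_shadows f (c / 4) z (glue_orbits f p w m q)
      \<and> limit_shadows f z (glue_orbits f p w m q)"
      unfolding L_shadowing_delta_def by blast
  qed
  from bchoice[OF this] obtain z where
    z: "\<forall>pq\<in>P \<times> Q. eps_shadows f (c / 4) (z pq) (glue_orbits f (fst pq) w m (snd pq))
      \<and> limit_shadows f (z pq) (glue_orbits f (fst pq) w m (snd pq))"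
    by blast
  have "inj_on z (P \<times> Q)"
    using P(3) Q(3) z by (intro inj_on_limit_shadows_glue_orbits) auto
  moreover define u where "u = z (p0, q0)"
  have "z (p, q) \<in> loc_stable f c u \<inter> loc_unstable f c u" if "p \<in> P" "q \<in> Q" for p q
  proof (rule eps_shadows_glue_orbits_close[where e = e and x = x and y = y])
    show "eps_shadows f (c / 4) (z (p, q)) (glue_orbits f p w m q)"
      "eps_shadows f (c / 4) u (glue_orbits f p0 w m q0)"
      using z that pq0 unfolding u_def by auto
  qed (use that pq0 P(2) Q(2) e in auto)
  then have "z ` (P \<times> Q) \<subseteq> loc_stable f c u \<inter> loc_unstable f c u" by auto
  ultimately have "card P * card Q \<le> card (loc_stable f c u \<inter> loc_unstable f c u)"
    using assms(2) unfolding expansivity_constant_def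
    by (metis card_cartesian_product card_image card_mono)
  also have "\<dots> \<le> n" using assms(2) unfolding expansivity_constant_def by blast
  finally show ?thesis .
qed

lemma Sup_enat_image_in: "finite S \<Longrightarrow> S \<noteq> {} \<Longrightarrow> Sup (enat ` S) \<in> enat ` S"
  by (metis Max_in cSup_eq_Max finite_imageI image_is_empty)

lemma Sup_enat_mult_Sup_enat_le:
  fixes A B :: "nat set"
  assumes "1 \<in> A" "1 \<in> B" "\<forall>a\<in>A. \<forall>b\<in>B. a * b \<le> n"
  shows "Sup (enat ` A) * Sup (enat ` B) \<le> enat n"
proof -
  have "A \<subseteq> {..n}" "B \<subseteq> {..n}" using assms by fastforce+
  then have "finite A" "finite B" by (auto intro: finite_subset)
  then obtain a b where "a \<in> A" "b \<in> B" "Sup (enat ` A) = enat a" "Sup (enat ` B) = enat b"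
    using Sup_enat_image_in assms(1,2) by (metis empty_iff imageE)
  with assms(3) show ?thesis by simp
qed

lemma num_unstable_mult_num_stable_le:
  fixes f :: "'a::metric_space \<Rightarrow> 'a"
  assumes "bij f" "expansivity_constant f n c" "L_shadowing_delta f (c / 4) d"
    and e: "e > 0" "4 * e \<le> d" "4 * e \<le> c"
    and w: "dist w x < e" "dist (iter f (int m) w) y < e"
  shows "num_unstable f x e * num_stable f y e \<le> enat n"
proof -
  define A where "A = {card E | E. finite E \<and> E \<subseteq> loc_unstable f e x
      \<and> pairwise (\<lambda>a b. a \<notin> unstable_set f b) E}"
  define B where "B = {card E | E. finite E \<and> E \<subseteq> loc_stable f e y
      \<and> pairwise (\<lambda>a b. a \<notin> stable_set f b) E}"
  have "num_unstable f x e = Sup (enat ` A)"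
    unfolding num_unstable_def A_def pairwise_def by (rule arg_cong[where f = Sup]) auto
  moreover have "num_stable f y e = Sup (enat ` B)"
    unfolding num_stable_def B_def pairwise_def by (rule arg_cong[where f = Sup]) auto
  moreover have "{x} \<subseteq> loc_unstable f e x" "{y} \<subseteq> loc_stable f e y"
    unfolding loc_unstable_def loc_stable_def using e(1) by auto
  then have "1 \<in> A" "1 \<in> B"
    unfolding A_def B_def by (force intro!: exI[of _ "{x}"], force intro!: exI[of _ "{y}"])
  moreover have "\<forall>a\<in>A. \<forall>b\<in>B. a * b \<le> n"
    unfolding A_def B_def using card_mult_card_le_expansivity_constant[OF assms] by blast
  ultimately show ?thesis by (simp add: Sup_enat_mult_Sup_enat_le)
qed

theorem theoremC:
  fixes f :: "'a::metric_space \<Rightarrow> 'a" and n :: nat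
  assumes "compact (UNIV :: 'a set)"
    and "\<exists>g. homeomorphism UNIV UNIV f g"
    and "n_expansive f n"
    and "L_shadowing f"
  shows "\<exists>e>0. (\<forall>x. num_unstable f x e * num_stable f x e \<le> enat n) \<and>
           (transitive f \<longrightarrow> (\<forall>x y. num_unstable f x e * num_stable f y e \<le> enat n))"
proof -
  have "bij f" using assms(2) unfolding homeomorphism_def by (metis bij_betw_byWitness subset_UNIV)
  obtain c where "c > 0" "expansivity_constant f n c" using assms(3) n_expansive_iff by blast
  moreover obtain d where "d > 0" "L_shadowing_delta f (c / 4) d"
    using assms(4) \<open>c > 0\<close> L_shadowing_iff by (meson divide_pos_pos zero_less_numeral)
  moreover define e where "e = min (c / 4) (d / 4)"
  ultimately have bound: "num_unstable f x e * num_stable f y e \<le> enat n"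
    if "dist w x < e" "dist (iter f (int m) w) y < e" for x y w m
    using num_unstable_mult_num_stable_le[OF \<open>bij f\<close> _ _ _ _ _ that] by auto
  have "e > 0" using \<open>c > 0\<close> \<open>d > 0\<close> unfolding e_def by simp
  moreover have "num_unstable f x e * num_stable f x e \<le> enat n" for x
    using bound[of x x 0] \<open>e > 0\<close> by simp
  moreover have "num_unstable f x e * num_stable f y e \<le> enat n" if tr: "transitive f" for x y
  proof -
    have "ball x e \<noteq> {}" "ball y e \<noteq> {}" using \<open>e > 0\<close> by auto
    then obtain k where "(f ^^ k) ` ball x e \<inter> ball y e \<noteq> {}"
      using tr unfolding transitive_def
      by (elim allE[of _ "ball x e"] allE[of _ "ball y e"]) auto
    then obtain w where "dist x w < e" "dist y ((f ^^ k) w) < e" by auto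
    then show ?thesis using bound[of w x k y] by (simp add: iter_of_nat dist_commute)
  qed
  ultimately show ?thesis by blast
qed

end
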